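(* Let $A=\mathrm{diag}(\mathbf{a})$ with $\mathbf{a}\in\mathbb{R}^n$, $\beta>0$, $f(\mathbf{z})=\frac12\mathbf{z}^*A\mathbf{z}+\frac{\beta}{2}\sum_k|z_k|^4$. A point $\mathbf{z}\in\mathbb{CS}^{n-1}$ is a local minimizer of $f$ on $\mathbb{CS}^{n-1}$ if and only if $\mathbf{z}$ is stationary and $H=A+2\beta\,\mathrm{diag}(|\mathbf{z}|^2)-2\lambda I\succeq0$, where $\lambda=\frac12\mathbf{z}^*A\mathbf{z}+\beta\|\mathbf{z}\|_4^4$. Moreover, every local minimizer $\mathbf{z}$ satisfies $z_k=\sqrt{u_k}\,e^{i\theta_k}$ for some $\theta_k\in[0,2\pi)$, $k\in[n]$, where $\mathbf{u}=\mathcal{P}_{\Delta_n}(-\mathbf{a}/(2\beta))$.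
   Context: $\mathbb{CS}^{n-1}$ is the unit sphere of $\mathbb{C}^n$; stationarity means $[A+2\beta\,\mathrm{diag}(|\mathbf{z}|^2)]\mathbf{z}=2\lambda\mathbf{z}$ with $|\mathbf{z}|^2=(|z_1|^2,\dots,|z_n|^2)$. $\Delta_n=\{\mathbf{u}\in\mathbb{R}^n:u_k\ge0,\ \sum_ku_k=1\}$ is the simplex and $\mathcal{P}_{\Delta_n}$ is the Euclidean projection onto it. *)

theory Defs
  imports "HOL-Analysis.Analysis"
begin

definition diag_mat :: "'a::zero ^ 'n \<Rightarrow> 'a ^ 'n ^ 'n" where
  "diag_mat v = (\<chi> i j. if i = j then v $ i else 0)"

definition quad_form :: "complex ^ 'n ^ 'n \<Rightarrow> complex ^ 'n \<Rightarrow> complex" where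
  "quad_form M z = (\<Sum>i\<in>UNIV. cnj (z $ i) * (M *v z) $ i)"

definition psd :: "complex ^ 'n ^ 'n \<Rightarrow> bool" where
  "psd H \<longleftrightarrow> (\<forall>x. Im (quad_form H x) = 0 \<and> 0 \<le> Re (quad_form H x))"

definition Amat :: "real ^ 'n \<Rightarrow> complex ^ 'n ^ 'n" where
  "Amat a = diag_mat (\<chi> k. complex_of_real (a $ k))"

definition absq_diag :: "complex ^ 'n \<Rightarrow> complex ^ 'n ^ 'n" where
  "absq_diag z = diag_mat (\<chi> k. complex_of_real ((norm (z $ k))\<^sup>2))"

definition energy :: "real ^ 'n \<Rightarrow> real \<Rightarrow> complex ^ 'n \<Rightarrow> real" where
  "energy a \<beta> z = Re (quad_form (Amat a) z) / 2 + \<beta> / 2 * (\<Sum>k\<in>UNIV. (norm (z $ k)) ^ 4)"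

definition lam :: "real ^ 'n \<Rightarrow> real \<Rightarrow> complex ^ 'n \<Rightarrow> real" where
  "lam a \<beta> z = Re (quad_form (Amat a) z) / 2 + \<beta> * (\<Sum>k\<in>UNIV. (norm (z $ k)) ^ 4)"

definition csphere :: "(complex ^ 'n) set" where
  "csphere = {z. norm z = 1}"

definition stationary :: "real ^ 'n \<Rightarrow> real \<Rightarrow> complex ^ 'n \<Rightarrow> bool" where
  "stationary a \<beta> z \<longleftrightarrow> z \<in> csphere \<and>
     (\<exists>lm::real. (Amat a + (2 * \<beta>) *\<^sub>R absq_diag z) *v z
                  = (2 * lm) *\<^sub>R z)"

definition local_min_on_sphere :: "real ^ 'n \<Rightarrow> real \<Rightarrow> complex ^ 'n \<Rightarrow> bool" where
  "local_min_on_sphere a \<beta> z \<longleftrightarrow> z \<in> csphere \<and>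
     (\<exists>e>0. \<forall>w\<in>csphere. dist w z < e \<longrightarrow> energy a \<beta> z \<le> energy a \<beta> w)"

definition simplex_n :: "(real ^ 'n) set" where
  "simplex_n = {u. (\<forall>k. 0 \<le> u $ k) \<and> (\<Sum>k\<in>UNIV. u $ k) = 1}"

definition proj_simplex :: "real ^ 'n \<Rightarrow> real ^ 'n" where
  "proj_simplex x = closest_point simplex_n x"

end

theory Submission
  imports Defs
begin

text \<open>
  The energy depends on \<open>z\<close> only through \<open>u = |z|\<^sup>2\<close>, and completing the square gives
  \<open>f z = \<beta>/2 \<parallel>u - c\<parallel>\<^sup>2 - \<beta>/2 \<parallel>c\<parallel>\<^sup>2\<close> with \<open>c = -a/(2\<beta>)\<close>. The map \<open>z \<mapsto> |z|\<^sup>2\<close> sends the sphere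
  onto the simplex \<open>\<Delta>\<close>, and keeping the phases of \<open>z\<close> gives a continuous right inverse
  through \<open>z\<close>. Hence \<open>z\<close> is a local minimiser iff \<open>u\<close> is a local, and by convexity global,
  minimiser of the distance to \<open>c\<close> on \<open>\<Delta>\<close>, i.e. \<open>u = P\<^sub>\<Delta>(c)\<close>; this is the polar form.
  By the variational characterisation of the projection, tested at the vertices of \<open>\<Delta>\<close>, this
  holds iff \<open>g = u - c\<close> satisfies \<open>g \<bullet> u \<le> g\<^sub>k\<close> for all \<open>k\<close>, which is \<open>H \<succeq> 0\<close> for the diagonal
  matrix \<open>H\<close>. Since \<open>g \<bullet> u\<close> is a \<open>u\<close>-weighted mean of the \<open>g\<^sub>k\<close>, this already forces
  \<open>g\<^sub>k = g \<bullet> u\<close> on the support of \<open>u\<close>, which is stationarity.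
\<close>

(* Unlike convex_local_global_minimum, minimality is only assumed relative to S:
   the simplex it is applied to has empty interior. *)
lemma convex_on_local_min_imp_min:
  fixes f :: "'a::real_normed_vector \<Rightarrow> real"
  assumes "convex_on S f" "x \<in> S" "y \<in> S" "e > 0"
    and local_min: "\<forall>y\<in>S. dist y x < e \<longrightarrow> f x \<le> f y"
  shows "f x \<le> f y"
proof (cases "x = y")
  case False
  define t where "t = min 1 (e / (2 * dist x y))"
  have "t * dist x y \<le> e / (2 * dist x y) * dist x y"
    by (rule mult_right_mono) (simp_all add: t_def)
  then have t: "0 < t" "t \<le> 1" "t * dist x y < e"
    using False \<open>e > 0\<close> by (auto simp: t_def)
  define p where "p = (1 - t) *\<^sub>R x + t *\<^sub>R y"
  have "p \<in> S"
    using convexD_alt[of S x y t] convex_on_def assms(1-3) t by (auto simp: p_def)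
  moreover have "dist p x = t * dist x y"
  proof -
    have "p - x = t *\<^sub>R (y - x)"
      by (simp add: p_def algebra_simps)
    then show ?thesis
      using t by (simp add: dist_norm norm_minus_commute)
  qed
  ultimately have "f x \<le> f p"
    using local_min t by auto
  also have "\<dots> \<le> (1 - t) * f x + t * f y"
    unfolding p_def using convex_onD[OF assms(1)] assms(2,3) t by simp
  finally show ?thesis
    using t by (simp add: algebra_simps)
qed simp

lemma closest_point_eq_iff_inner_le:
  fixes S :: "'a::{real_inner,heine_borel} set"
  assumes "convex S" "closed S" "x \<in> S"
  shows "x = closest_point S a \<longleftrightarrow> (\<forall>y\<in>S. inner (a - x) (y - x) \<le> 0)"
proof
  assume "x = closest_point S a"
  then show "\<forall>y\<in>S. inner (a - x) (y - x) \<le> 0"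
    using closest_point_dot[OF assms(1,2)] by blast
next
  assume obtuse: "\<forall>y\<in>S. inner (a - x) (y - x) \<le> 0"
  have "dist a x \<le> dist a y" if "y \<in> S" for y
  proof -
    have "(norm (a - y))\<^sup>2 = (norm (a - x))\<^sup>2 - 2 * inner (a - x) (y - x) + (norm (y - x))\<^sup>2"
      by (simp add: power2_norm_eq_inner inner_diff inner_commute)
    moreover have "inner (a - x) (y - x) \<le> 0"
      using obtuse that by blast
    ultimately have "(norm (a - x))\<^sup>2 \<le> (norm (a - y))\<^sup>2"
      using zero_le_power2[of "norm (y - x)"] by linarith
    then show ?thesis
      by (simp add: dist_norm power2_le_iff_abs_le)
  qed
  then show "x = closest_point S a"
    using closest_point_unique[OF assms] by blast
qed

lemma convex_simplex_n: "convex (simplex_n :: (real ^ 'n) set)"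
  unfolding simplex_n_def convex_def
  by (auto simp: sum.distrib simp flip: sum_distrib_left)

lemma closed_simplex_n: "closed (simplex_n :: (real ^ 'n) set)"
  unfolding simplex_n_def Collect_conj_eq
  by (intro closed_Int closed_Collect_all closed_Collect_le closed_Collect_eq continuous_intros)

lemma simplex_n_variational_iff:
  fixes g u :: "real ^ 'n"
  assumes "u \<in> simplex_n"
  shows "(\<forall>v\<in>simplex_n. 0 \<le> g \<bullet> (v - u)) \<longleftrightarrow> (\<forall>k. g \<bullet> u \<le> g $ k)"
proof
  assume "\<forall>v\<in>simplex_n. 0 \<le> g \<bullet> (v - u)"
  moreover have "axis k 1 \<in> simplex_n" for k
    by (simp add: simplex_n_def axis_def)
  ultimately show "\<forall>k. g \<bullet> u \<le> g $ k"
    by (fastforce simp: inner_diff_right inner_axis)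
next
  assume min: "\<forall>k. g \<bullet> u \<le> g $ k"
  show "\<forall>v\<in>simplex_n. 0 \<le> g \<bullet> (v - u)"
  proof
    fix v :: "real ^ 'n" assume "v \<in> simplex_n"
    then have "g \<bullet> u = (\<Sum>k\<in>UNIV. (g \<bullet> u) * v $ k)"
      by (simp add: simplex_n_def flip: sum_distrib_left)
    also have "\<dots> \<le> (\<Sum>k\<in>UNIV. g $ k * v $ k)"
      using min \<open>v \<in> simplex_n\<close> by (intro sum_mono mult_right_mono) (auto simp: simplex_n_def)
    also have "\<dots> = g \<bullet> v"
      by (simp add: inner_vec_def)
    finally show "0 \<le> g \<bullet> (v - u)"
      by (simp add: inner_diff_right)
  qed
qed

lemma simplex_n_component_eq_inner_on_support:
  assumes "u \<in> simplex_n" "\<forall>j. g \<bullet> u \<le> g $ j" "0 < u $ k"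
  shows "g $ k = g \<bullet> u"
proof -
  have "(\<Sum>j\<in>UNIV. (g $ j - g \<bullet> u) * u $ j) = g \<bullet> u - (g \<bullet> u) * (\<Sum>j\<in>UNIV. u $ j)"
    by (simp add: left_diff_distrib sum_subtractf inner_vec_def sum_distrib_left)
  also have "\<dots> = 0"
    using assms(1) by (simp add: simplex_n_def)
  finally have "\<forall>j\<in>UNIV. (g $ j - g \<bullet> u) * u $ j = 0"
    using assms(1,2) by (subst sum_nonneg_eq_0_iff[symmetric]) (auto simp: simplex_n_def)
  then show ?thesis
    using assms(3) by auto
qed

lemma diag_mat_mult_vec: "(diag_mat v *v x) $ i = v $ i * x $ i"
proof -
  have "(\<Sum>j\<in>UNIV. (if i = j then v $ i else 0) * x $ j) = (\<Sum>j\<in>UNIV. if i = j then v $ i * x $ j else 0)"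
    by (rule sum.cong) auto
  then show ?thesis
    by (simp add: diag_mat_def matrix_vector_mult_def)
qed

lemma quad_form_diag_mat:
  "quad_form (diag_mat v) x = (\<Sum>i\<in>UNIV. v $ i * of_real ((cmod (x $ i))\<^sup>2))"
  unfolding quad_form_def diag_mat_mult_vec complex_norm_square
  by (rule sum.cong) (auto simp: algebra_simps)

lemma psd_diag_mat_of_real_iff:
  fixes h :: "'n::finite \<Rightarrow> real"
  shows "psd (diag_mat (\<chi> k. complex_of_real (h k))) \<longleftrightarrow> (\<forall>k. 0 \<le> h k)"
proof
  assume psd: "psd (diag_mat (\<chi> k. complex_of_real (h k)))"
  show "\<forall>k. 0 \<le> h k"
  proof
    fix k
    have "quad_form (diag_mat (\<chi> k. complex_of_real (h k))) (axis k 1) = h k"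
    proof -
      have "(\<Sum>i\<in>UNIV. complex_of_real (h i) * complex_of_real ((cmod (axis k 1 $ i))\<^sup>2))
          = (\<Sum>i\<in>UNIV. if i = k then complex_of_real (h k) else 0)"
        by (rule sum.cong) (auto simp: axis_def)
      then show ?thesis
        unfolding quad_form_diag_mat by simp
    qed
    then show "0 \<le> h k"
      using psd unfolding psd_def by (metis Re_complex_of_real)
  qed
next
  assume "\<forall>k. 0 \<le> h k"
  then have "0 \<le> (\<Sum>i\<in>UNIV. h i * (cmod (x $ i))\<^sup>2)" for x :: "complex ^ 'n"
    by (intro sum_nonneg mult_nonneg_nonneg) auto
  then show "psd (diag_mat (\<chi> k. complex_of_real (h k)))"
    unfolding psd_def quad_form_diag_mat by simp
qed

lemma diag_mat_minus_scaleR_mat_1: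
  "diag_mat v - d *\<^sub>R mat 1 = diag_mat (\<chi> k. v $ k - of_real d)"
  by (simp add: vec_eq_iff diag_mat_def mat_def) (simp add: scaleR_conv_of_real)

definition sq_moduli :: "complex ^ 'n \<Rightarrow> real ^ 'n" where
  "sq_moduli z = (\<chi> k. (cmod (z $ k))\<^sup>2)"

lemma Amat_plus_absq_diag:
  "Amat a + c *\<^sub>R absq_diag z = diag_mat (\<chi> k. complex_of_real (a $ k + c * sq_moduli z $ k))"
  by (simp add: vec_eq_iff Amat_def absq_diag_def diag_mat_def sq_moduli_def)
     (simp add: scaleR_conv_of_real)

lemma Re_quad_form_Amat: "Re (quad_form (Amat a) z) = a \<bullet> sq_moduli z"
  unfolding Amat_def quad_form_diag_mat sq_moduli_def inner_vec_def by simp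

lemma sum_power4_eq_norm_sq_moduli: "(\<Sum>k\<in>UNIV. (cmod (z $ k)) ^ 4) = (norm (sq_moduli z))\<^sup>2"
  unfolding sq_moduli_def norm_vec_def L2_set_def by (simp add: sum_nonneg flip: power_mult)

lemma csphere_iff_sq_moduli: "z \<in> csphere \<longleftrightarrow> sq_moduli z \<in> simplex_n"
  unfolding csphere_def simplex_n_def norm_vec_def L2_set_def sq_moduli_def by simp

lemma energy_eq_dist:
  fixes a :: "real ^ 'n" and z :: "complex ^ 'n"
  assumes "\<beta> > 0"
  defines "c \<equiv> \<chi> j. - a $ j / (2 * \<beta>)"
  shows "energy a \<beta> z = \<beta> / 2 * (dist c (sq_moduli z))\<^sup>2 - \<beta> / 2 * (norm c)\<^sup>2"
proof -
  have "a = - (2 * \<beta>) *\<^sub>R c"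
    using assms by (simp add: c_def vec_eq_iff)
  then show ?thesis
    unfolding energy_def Re_quad_form_Amat sum_power4_eq_norm_sq_moduli dist_norm
    by (simp add: power2_norm_eq_inner inner_diff inner_commute algebra_simps)
qed

lemma energy_le_iff_dist_le:
  fixes a :: "real ^ 'n" and z :: "complex ^ 'n"
  assumes "\<beta> > 0"
  defines "c \<equiv> \<chi> j. - a $ j / (2 * \<beta>)"
  shows "energy a \<beta> z \<le> energy a \<beta> w \<longleftrightarrow> dist c (sq_moduli z) \<le> dist c (sq_moduli w)"
  using assms by (simp add: energy_eq_dist power2_le_iff_abs_le)

lemma lam_eq_inner:
  fixes a :: "real ^ 'n" and z :: "complex ^ 'n"
  assumes "\<beta> > 0"
  defines "g \<equiv> sq_moduli z - (\<chi> j. - a $ j / (2 * \<beta>))"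
  shows "lam a \<beta> z = \<beta> * (g \<bullet> sq_moduli z)"
proof -
  have "g = sq_moduli z + (1 / (2 * \<beta>)) *\<^sub>R a"
    by (simp add: g_def vec_eq_iff)
  then show ?thesis
    using assms(1) unfolding lam_def Re_quad_form_Amat sum_power4_eq_norm_sq_moduli
    by (simp add: power2_norm_eq_inner inner_add_left field_simps)
qed

lemma psd_hessian_iff:
  fixes a :: "real ^ 'n" and z :: "complex ^ 'n"
  assumes "\<beta> > 0"
  defines "g \<equiv> sq_moduli z - (\<chi> j. - a $ j / (2 * \<beta>))"
  shows "psd (Amat a + (2 * \<beta>) *\<^sub>R absq_diag z - (2 * lam a \<beta> z) *\<^sub>R mat 1)
    \<longleftrightarrow> (\<forall>k. g \<bullet> sq_moduli z \<le> g $ k)"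
proof -
  have "a $ k + 2 * \<beta> * sq_moduli z $ k - 2 * lam a \<beta> z = 2 * \<beta> * (g $ k - g \<bullet> sq_moduli z)"
    for k
    unfolding lam_eq_inner[OF assms(1)] using assms(1) by (simp add: g_def field_simps)
  then have "complex_of_real (a $ k + 2 * \<beta> * sq_moduli z $ k) - complex_of_real (2 * lam a \<beta> z)
      = complex_of_real (2 * \<beta> * (g $ k - g \<bullet> sq_moduli z))" for k
    by (metis of_real_diff)
  then have hessian: "Amat a + (2 * \<beta>) *\<^sub>R absq_diag z - (2 * lam a \<beta> z) *\<^sub>R mat 1
      = diag_mat (\<chi> k. complex_of_real (2 * \<beta> * (g $ k - g \<bullet> sq_moduli z)))"
    unfolding Amat_plus_absq_diag diag_mat_minus_scaleR_mat_1 vec_lambda_beta by (simp only:)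
  show ?thesis
    unfolding hessian psd_diag_mat_of_real_iff using assms(1) by (simp add: zero_le_mult_iff)
qed

lemma stationary_if_gradient_ge:
  fixes a :: "real ^ 'n" and z :: "complex ^ 'n"
  assumes "\<beta> > 0" "z \<in> csphere"
  defines "g \<equiv> sq_moduli z - (\<chi> j. - a $ j / (2 * \<beta>))"
  assumes gradient_ge: "\<forall>k. g \<bullet> sq_moduli z \<le> g $ k"
  shows "stationary a \<beta> z"
  unfolding stationary_def
proof (intro conjI exI)
  show "(Amat a + (2 * \<beta>) *\<^sub>R absq_diag z) *v z = (2 * (\<beta> * (g \<bullet> sq_moduli z))) *\<^sub>R z"
    unfolding vec_eq_iff
  proof
    fix k
    show "((Amat a + (2 * \<beta>) *\<^sub>R absq_diag z) *v z) $ k = ((2 * (\<beta> * (g \<bullet> sq_moduli z))) *\<^sub>R z) $ k"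
    proof (cases "z $ k = 0")
      case False
      then have "g $ k = g \<bullet> sq_moduli z"
        using assms(2) gradient_ge csphere_iff_sq_moduli
        by (intro simplex_n_component_eq_inner_on_support) (auto simp: sq_moduli_def)
      then have eigen: "a $ k + 2 * \<beta> * sq_moduli z $ k = 2 * (\<beta> * (g \<bullet> sq_moduli z))"
        using assms(1) by (simp add: g_def field_simps)
      show ?thesis
        unfolding Amat_plus_absq_diag diag_mat_mult_vec vector_scaleR_component vec_lambda_beta eigen
        by (simp add: scaleR_conv_of_real)
    qed (simp add: Amat_plus_absq_diag diag_mat_mult_vec)
  qed
qed (use assms in simp)

definition lift_with_phases :: "complex ^ 'n \<Rightarrow> real ^ 'n \<Rightarrow> complex ^ 'n" where
  "lift_with_phases z u =
     (\<chi> k. complex_of_real (sqrt (u $ k)) * (if z $ k = 0 then 1 else sgn (z $ k)))"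

lemma sq_moduli_lift_with_phases: "\<forall>k. 0 \<le> u $ k \<Longrightarrow> sq_moduli (lift_with_phases z u) = u"
  by (simp add: vec_eq_iff sq_moduli_def lift_with_phases_def norm_mult norm_sgn)

lemma lift_with_phases_sq_moduli: "lift_with_phases z (sq_moduli z) = z"
  by (simp add: vec_eq_iff sq_moduli_def lift_with_phases_def sgn_div_norm scaleR_conv_of_real)

lemma isCont_lift_with_phases: "isCont (lift_with_phases z) u"
proof -
  have "continuous_on UNIV (lift_with_phases z)"
    unfolding lift_with_phases_def by (intro continuous_intros)
  then show ?thesis
    by (simp add: continuous_on_eq_continuous_at)
qed

lemma vec_nth_eq_polar_sq_moduli:
  "z $ k = complex_of_real (sqrt (sq_moduli z $ k)) * exp (\<i> * complex_of_real (Arg2pi (z $ k)))"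
  using Arg2pi_eq[of "z $ k"] by (simp add: sq_moduli_def)

lemma local_min_on_sphere_iff_proj_simplex:
  fixes a :: "real ^ 'n" and z :: "complex ^ 'n"
  assumes "\<beta> > 0" "z \<in> csphere"
  shows "local_min_on_sphere a \<beta> z \<longleftrightarrow> sq_moduli z = proj_simplex (\<chi> j. - a $ j / (2 * \<beta>))"
proof -
  define c where "c = (\<chi> j. - a $ j / (2 * \<beta>))"
  have u: "sq_moduli z \<in> simplex_n"
    using assms(2) csphere_iff_sq_moduli by blast
  have "local_min_on_sphere a \<beta> z \<longleftrightarrow> (\<forall>v\<in>simplex_n. dist c (sq_moduli z) \<le> dist c v)"
  proof
    assume "local_min_on_sphere a \<beta> z"
    then obtain e where "e > 0" and e: "\<forall>w\<in>csphere. dist w z < e \<longrightarrow> energy a \<beta> z \<le> energy a \<beta> w"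
      unfolding local_min_on_sphere_def by blast
    then obtain \<delta> where "\<delta> > 0"
      and \<delta>: "\<forall>v. dist v (sq_moduli z) < \<delta> \<longrightarrow> dist (lift_with_phases z v) z < e"
      using isCont_lift_with_phases[where z = z and u = "sq_moduli z"]
      unfolding continuous_at_eps_delta lift_with_phases_sq_moduli by blast
    have "dist c (sq_moduli z) \<le> dist c v" if "v \<in> simplex_n" "dist v (sq_moduli z) < \<delta>" for v
    proof -
      have lift: "sq_moduli (lift_with_phases z v) = v"
        using that(1) by (simp add: simplex_n_def sq_moduli_lift_with_phases)
      then have "lift_with_phases z v \<in> csphere"
        using that(1) csphere_iff_sq_moduli by metis
      then have "energy a \<beta> z \<le> energy a \<beta> (lift_with_phases z v)"
        using e \<delta> that(2) by blast
      then show ?thesis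
        using energy_le_iff_dist_le[OF assms(1)] lift by (metis c_def)
    qed
    then show "\<forall>v\<in>simplex_n. dist c (sq_moduli z) \<le> dist c v"
      using convex_on_local_min_imp_min[OF convex_on_dist[OF convex_simplex_n] u _ \<open>\<delta> > 0\<close>]
      by (simp add: dist_commute)
  next
    assume "\<forall>v\<in>simplex_n. dist c (sq_moduli z) \<le> dist c v"
    then have "energy a \<beta> z \<le> energy a \<beta> w" if "w \<in> csphere" for w
      using that csphere_iff_sq_moduli energy_le_iff_dist_le[OF assms(1)] by (metis c_def)
    then show "local_min_on_sphere a \<beta> z"
      unfolding local_min_on_sphere_def using assms(2) zero_less_one by blast
  qed
  also have "\<dots> \<longleftrightarrow> sq_moduli z = proj_simplex c"
    using closest_point_unique[OF convex_simplex_n closed_simplex_n u]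
      closest_point_le[OF closed_simplex_n] unfolding proj_simplex_def by metis
  finally show ?thesis
    by (simp add: c_def)
qed

lemma local_min_on_sphere_iff_gradient_ge:
  fixes a :: "real ^ 'n" and z :: "complex ^ 'n"
  assumes "\<beta> > 0" "z \<in> csphere"
  defines "g \<equiv> sq_moduli z - (\<chi> j. - a $ j / (2 * \<beta>))"
  shows "local_min_on_sphere a \<beta> z \<longleftrightarrow> (\<forall>k. g \<bullet> sq_moduli z \<le> g $ k)"
proof -
  have u: "sq_moduli z \<in> simplex_n"
    using assms(2) csphere_iff_sq_moduli by blast
  have "local_min_on_sphere a \<beta> z \<longleftrightarrow> sq_moduli z = closest_point simplex_n (\<chi> j. - a $ j / (2 * \<beta>))"
    unfolding local_min_on_sphere_iff_proj_simplex[OF assms(1,2)] proj_simplex_def ..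
  also have "\<dots> \<longleftrightarrow> (\<forall>v\<in>simplex_n. 0 \<le> g \<bullet> (v - sq_moduli z))"
  proof -
    have "(\<chi> j. - a $ j / (2 * \<beta>)) - sq_moduli z = - g"
      by (simp add: g_def)
    then show ?thesis
      unfolding closest_point_eq_iff_inner_le[OF convex_simplex_n closed_simplex_n u]
      by (simp add: inner_minus_left)
  qed
  also have "\<dots> \<longleftrightarrow> (\<forall>k. g \<bullet> sq_moduli z \<le> g $ k)"
    by (rule simplex_n_variational_iff[OF u])
  finally show ?thesis .
qed

theorem theorem6:
  fixes a :: "real ^ 'n" and \<beta> :: real
  assumes "\<beta> > 0"
  shows "(\<forall>z \<in> csphere.
            local_min_on_sphere a \<beta> z \<longleftrightarrow>
              (stationary a \<beta> z \<and>
               psd (Amat a + (2 * \<beta>) *\<^sub>R absq_diag z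
                    - (2 * lam a \<beta> z) *\<^sub>R mat 1)))
       \<and> (\<forall>z. local_min_on_sphere a \<beta> z \<longrightarrow>
            (\<exists>\<theta>::'n \<Rightarrow> real. \<forall>k. 0 \<le> \<theta> k \<and> \<theta> k < 2 * pi \<and>
               z $ k = complex_of_real (sqrt (proj_simplex (\<chi> j. - a $ j / (2 * \<beta>)) $ k))
                       * exp (\<i> * complex_of_real (\<theta> k))))"
proof (intro conjI ballI allI impI)
  fix z :: "complex ^ 'n"
  assume "z \<in> csphere"
  then show "local_min_on_sphere a \<beta> z \<longleftrightarrow>
      stationary a \<beta> z \<and> psd (Amat a + (2 * \<beta>) *\<^sub>R absq_diag z - (2 * lam a \<beta> z) *\<^sub>R mat 1)"
    using local_min_on_sphere_iff_gradient_ge[OF assms] psd_hessian_iff[OF assms]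
      stationary_if_gradient_ge[OF assms] by blast
next
  fix z :: "complex ^ 'n"
  assume local_min: "local_min_on_sphere a \<beta> z"
  then have "z \<in> csphere"
    by (simp add: local_min_on_sphere_def)
  then have proj: "proj_simplex (\<chi> j. - a $ j / (2 * \<beta>)) = sq_moduli z"
    using local_min local_min_on_sphere_iff_proj_simplex[OF assms] by metis
  show "\<exists>\<theta>::'n \<Rightarrow> real. \<forall>k. 0 \<le> \<theta> k \<and> \<theta> k < 2 * pi \<and>
      z $ k = complex_of_real (sqrt (proj_simplex (\<chi> j. - a $ j / (2 * \<beta>)) $ k)) * exp (\<i> * complex_of_real (\<theta> k))"
    unfolding proj
    by (intro exI[of _ "\<lambda>k. Arg2pi (z $ k)"] allI conjI Arg2pi_ge_0 Arg2pi_lt_2pi vec_nth_eq_polar_sq_moduli)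
qed

end
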